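(* Let $n$ be a positive integer and let $\mathcal{H}_{DL;n}$ be the class of decision lists over $n$ Boolean variables. For any $\epsilon\in(2^{-n},1)$, the class $\mathcal{H}_{DL;n}$ is $\left(\min\left\{\frac{1}{200n^4},\epsilon\right\},\epsilon\right)$-separable.
   Context: The domain is $\mathcal{X}=\{0,1\}^n$. A decision list is a function $\mathcal{X}\to\{0,1\}$ of the form "if $\ell_1$ then $b_1$ else if $\ell_2$ then $b_2$ $\ldots$ else if $\ell_k$ then $b_k$ else $b_{k+1}$", where $\ell_1,\ldots,\ell_k$ are literals (variables $x_r$ or their negations) over the $n$ variables and $b_1,\ldots,b_{k+1}\in\{0,1\}$; $\mathcal{H}_{DL;n}$ is the set of all such functions. For a class $\mathcal{H}$ over finite domain $\mathcal{X}$, the hypotheses graph is bipartite with parts $\mathcal{H}$ and $\mathcal{X}$, $h$ adjacent to $x$ iff $h(x)=1$. For $S\subseteq\mathcal{X}$, $T\subseteq\mathcal{H}$, $d(S,T)=\frac{e(S,T)}{|S||T|}$ with $e(S,T)$ the number of edges between $S$ and $T$. Hypotheses $h_1,h_2$ are $\epsilon$-close if $|\{x\in\mathcal{X}: h_1(x)\ne h_2(x)\}|\le\epsilon|\mathcal{X}|$; $B_h(\epsilon)$ is the set of hypotheses $\epsilon$-close to $h$. $T\subseteq\mathcal{H}$ is $(\alpha,\epsilon)$-tight if some $h$ has $|T\cap B_h(\epsilon)|\ge\alpha|T|$. $\mathcal{H}$ is $(\alpha,\epsilon)$-separable if for every $T\subseteq\mathcal{H}$ that is not $(\alpha,\epsilon)$-tight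 there exist $S\subseteq\mathcal{X}$ and disjoint $T_0,T_1\subseteq T$ with $|S|\ge\alpha|\mathcal{X}|$, $|T_0|,|T_1|\ge\alpha|T|$ and $|d(S,T_0)-d(S,T_1)|\ge\alpha$. *)

theory Defs
  imports Main "HOL.Real"
begin

definition edges :: "'x set \<Rightarrow> ('x \<Rightarrow> bool) set \<Rightarrow> nat" where
  "edges S T = card {(x, h). x \<in> S \<and> h \<in> T \<and> h x}"

definition density :: "'x set \<Rightarrow> ('x \<Rightarrow> bool) set \<Rightarrow> real" where
  "density S T = real (edges S T) / (real (card S) * real (card T))"

definition eps_close :: "'x set \<Rightarrow> real \<Rightarrow> ('x \<Rightarrow> bool) \<Rightarrow> ('x \<Rightarrow> bool) \<Rightarrow> bool" where
  "eps_close X \<epsilon> h1 h2 \<longleftrightarrow> real (card {x \<in> X. h1 x \<noteq> h2 x}) \<le> \<epsilon> * real (card X)"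

definition ball_H :: "'x set \<Rightarrow> ('x \<Rightarrow> bool) set \<Rightarrow> real \<Rightarrow> ('x \<Rightarrow> bool) \<Rightarrow> ('x \<Rightarrow> bool) set" where
  "ball_H X H \<epsilon> h = {h' \<in> H. eps_close X \<epsilon> h h'}"

definition tight :: "'x set \<Rightarrow> ('x \<Rightarrow> bool) set \<Rightarrow> real \<Rightarrow> real \<Rightarrow> ('x \<Rightarrow> bool) set \<Rightarrow> bool" where
  "tight X H \<alpha> \<epsilon> T \<longleftrightarrow> (\<exists>h\<in>H. real (card (T \<inter> ball_H X H \<epsilon> h)) \<ge> \<alpha> * real (card T))"

definition separable :: "'x set \<Rightarrow> ('x \<Rightarrow> bool) set \<Rightarrow> real \<Rightarrow> real \<Rightarrow> bool" where
  "separable X H \<alpha> \<epsilon> \<longleftrightarrow>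
     (\<forall>T. T \<subseteq> H \<longrightarrow> \<not> tight X H \<alpha> \<epsilon> T \<longrightarrow>
        (\<exists>S T0 T1. S \<subseteq> X \<and> T0 \<subseteq> T \<and> T1 \<subseteq> T \<and> T0 \<inter> T1 = {} \<and>
           real (card S) \<ge> \<alpha> * real (card X) \<and>
           real (card T0) \<ge> \<alpha> * real (card T) \<and>
           real (card T1) \<ge> \<alpha> * real (card T) \<and>
           \<bar>density S T0 - density S T1\<bar> \<ge> \<alpha>))"

definition cube :: "nat \<Rightarrow> bool list set" where
  "cube n = {xs. length xs = n}"

(* a literal (r, p) is x_r if p = True and the negation of x_r if p = False *)
type_synonym literal = "nat \<times> bool"

definition lit_val :: "literal \<Rightarrow> bool list \<Rightarrow> bool" where
  "lit_val l x = (x ! fst l = snd l)"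

fun dl_eval :: "(literal \<times> bool) list \<Rightarrow> bool \<Rightarrow> bool list \<Rightarrow> bool" where
  "dl_eval [] d x = d"
| "dl_eval ((l, b) # rest) d x = (if lit_val l x then b else dl_eval rest d x)"

(* the class H_{DL;n}: functions on {0,1}^n (extended by False outside the domain,
   so distinct hypotheses are distinct functions on the domain) *)
definition H_DL :: "nat \<Rightarrow> (bool list \<Rightarrow> bool) set" where
  "H_DL n = {(\<lambda>x. if x \<in> cube n then dl_eval L d x else False) | L d.
              \<forall>lb \<in> set L. fst (fst lb) < n}"

end

theory Submission
  imports Defs
begin

text \<open>Suppose a family \<open>T\<close> of decision lists is neither tight nor separable. We build one decision
  list, literal by literal, that is \<open>\<alpha>\<close>-close to an \<open>\<alpha>\<close>-fraction of \<open>T\<close>, a contradiction.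
  On a subcube every decision list is either constant or forced to a constant \<open>b\<close> by a single free
  literal, so by pigeonhole a \<open>1 / (4n + 4)\<close> fraction \<open>G\<close> of the current hypotheses is constant on
  one half \<open>P\<close> of the subcube. As \<open>G\<close> cannot be separated from any large family, few hypotheses
  disagree with \<open>b\<close> on an \<open>\<alpha>\<close>-fraction of \<open>P\<close>. A hypothesis with fewer disagreements is again
  forced to \<open>b\<close> by a literal, so its disagreements concentrate on a half of \<open>P\<close>; iterating twice
  lowers the threshold to \<open>\<alpha> / 4\<close> and leaves at most \<open>(1 + 2n + 4n\<^sup>2) \<alpha> |T|\<close> hypotheses above it.
  We discard those, record the literal and recurse on the other half of the subcube. The errors sum
  geometrically, and \<open>\<alpha> \<le> 1 / (200 n\<^sup>4)\<close> keeps the \<open>n\<close> discards and the final pigeonhole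
  factor small.\<close>

section \<open>Subcubes\<close>

definition subcube :: "nat \<Rightarrow> (nat \<Rightarrow> bool option) \<Rightarrow> bool list set" where
  "subcube n \<sigma> = {x \<in> cube n. \<forall>r<n. \<forall>b. \<sigma> r = Some b \<longrightarrow> x ! r = b}"

definition free_vars :: "nat \<Rightarrow> (nat \<Rightarrow> bool option) \<Rightarrow> nat set" where
  "free_vars n \<sigma> = {r. r < n \<and> \<sigma> r = None}"

lemma finite_cube: "finite (cube n)"
proof -
  have "cube n = {xs. set xs \<subseteq> UNIV \<and> length xs = n}"
    by (auto simp: cube_def)
  then show ?thesis
    using finite_lists_length_eq[of "UNIV :: bool set" n] by simp
qed

lemma card_cube_pos: "card (cube n) > 0"
proof -
  have "replicate n False \<in> cube n"
    by (simp add: cube_def)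
  then show ?thesis
    using finite_cube card_gt_0_iff by (metis empty_iff)
qed

lemma subcube_subset_cube: "subcube n \<sigma> \<subseteq> cube n"
  by (auto simp: subcube_def)

lemma finite_subcube: "finite (subcube n \<sigma>)"
  using finite_subset[OF subcube_subset_cube finite_cube] .

lemma subcube_unrestricted: "subcube n (\<lambda>_. None) = cube n"
  by (auto simp: subcube_def)

lemma subcube_fix:
  "r < n \<Longrightarrow> \<sigma> r = None \<Longrightarrow> subcube n (\<sigma>(r := Some p)) = {x \<in> subcube n \<sigma>. x ! r = p}"
  by (auto simp: subcube_def)

lemma subcube_fix_subset:
  "r < n \<Longrightarrow> \<sigma> r = None \<Longrightarrow> subcube n (\<sigma>(r := Some p)) \<subseteq> subcube n \<sigma>"
  by (simp add: subcube_fix)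

lemma card_subcube_fix_le:
  assumes "r < n" "\<sigma> r = None"
  shows "card (subcube n (\<sigma>(r := Some p))) \<le> card (subcube n (\<sigma>(r := Some (\<not> p))))"
proof -
  let ?flip = "\<lambda>x :: bool list. x[r := \<not> x ! r]"
  have "?flip (?flip x) = x" if "x \<in> cube n" for x
    using that assms(1) by (simp add: cube_def)
  then have "inj_on ?flip (subcube n (\<sigma>(r := Some p)))"
    using subcube_subset_cube by (intro inj_on_inverseI[of _ ?flip]) blast
  moreover have "?flip ` subcube n (\<sigma>(r := Some p)) \<subseteq> subcube n (\<sigma>(r := Some (\<not> p)))"
    using assms by (auto simp: subcube_def cube_def nth_list_update)
  ultimately show ?thesis
    using card_inj_on_le finite_subcube by blast
qed

lemma card_subcube_halves:
  assumes "r < n" "\<sigma> r = None"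
  shows "card (subcube n \<sigma>) = 2 * card (subcube n (\<sigma>(r := Some p)))"
proof -
  let ?A = "subcube n (\<sigma>(r := Some p))" and ?B = "subcube n (\<sigma>(r := Some (\<not> p)))"
  have "card ?A = card ?B"
    using card_subcube_fix_le[of r n \<sigma> p] card_subcube_fix_le[of r n \<sigma> "\<not> p"] assms by simp
  moreover have "subcube n \<sigma> = ?A \<union> ?B" and "?A \<inter> ?B = {}"
    using assms by (auto simp: subcube_fix)
  ultimately show ?thesis
    using card_Un_disjoint[of ?A ?B] finite_subcube by simp
qed

lemma card_subcube_no_free_vars:
  assumes "free_vars n \<sigma> = {}"
  shows "card (subcube n \<sigma>) \<le> 1"
proof -
  have "x = y" if "x \<in> subcube n \<sigma>" "y \<in> subcube n \<sigma>" for x y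
  proof (rule nth_equalityI)
    show "length x = length y"
      using that by (simp add: subcube_def cube_def)
    fix i assume "i < length x"
    with that assms obtain b where "i < n" "\<sigma> i = Some b"
      by (auto simp: subcube_def cube_def free_vars_def)
    with that show "x ! i = y ! i"
      by (simp add: subcube_def)
  qed
  then show ?thesis
    using card_le_Suc0_iff_eq[OF finite_subcube, of n \<sigma>] by simp
qed

lemma finite_free_vars: "finite (free_vars n \<sigma>)"
  by (rule finite_subset[of _ "{..<n}"]) (auto simp: free_vars_def)

lemma card_free_vars_le: "card (free_vars n \<sigma>) \<le> n"
  using card_mono[of "{..<n}" "free_vars n \<sigma>"] by (auto simp: free_vars_def)

lemma card_free_vars_fix:
  assumes "r < n" "\<sigma> r = None"
  shows "card (free_vars n (\<sigma>(r := Some p))) = card (free_vars n \<sigma>) - 1"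
proof -
  from assms have "free_vars n (\<sigma>(r := Some p)) = free_vars n \<sigma> - {r}" and "r \<in> free_vars n \<sigma>"
    by (auto simp: free_vars_def)
  then show ?thesis
    using finite_free_vars by simp
qed

section \<open>Decision lists on subcubes\<close>

abbreviation dl_wf :: "nat \<Rightarrow> (literal \<times> bool) list \<Rightarrow> bool" where
  "dl_wf n L \<equiv> \<forall>lb \<in> set L. fst (fst lb) < n"

definition dl_fun :: "nat \<Rightarrow> (literal \<times> bool) list \<Rightarrow> bool \<Rightarrow> bool list \<Rightarrow> bool" where
  "dl_fun n L d = (\<lambda>x. if x \<in> cube n then dl_eval L d x else False)"

lemma H_DL_eq: "H_DL n = {dl_fun n L d | L d. dl_wf n L}"
  by (simp add: H_DL_def dl_fun_def)

lemma dl_fun_in_H_DL: "dl_wf n L \<Longrightarrow> dl_fun n L d \<in> H_DL n"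
  by (auto simp: H_DL_eq)

lemma dl_eval_constant_or_literal:
  assumes "dl_wf n L"
  shows "(\<exists>b. \<forall>x\<in>subcube n \<sigma>. dl_eval L d x = b) \<or>
    (\<exists>r p b. r < n \<and> \<sigma> r = None \<and> (\<forall>x\<in>subcube n \<sigma>. x ! r = p \<longrightarrow> dl_eval L d x = b))"
  using assms
proof (induction L)
  case Nil
  then show ?case by auto
next
  case (Cons lb L)
  obtain r p b where lb: "lb = ((r, p), b)"
    by (metis prod.collapse)
  with Cons.prems have "r < n" by auto
  show ?case
  proof (cases "\<sigma> r")
    case None
    with \<open>r < n\<close> show ?thesis
      by (auto simp: lb lit_val_def)
  next
    case (Some q)
    with \<open>r < n\<close> have "\<forall>x\<in>subcube n \<sigma>. x ! r = q"
      by (auto simp: subcube_def)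
    then show ?thesis
      using Cons by (cases "q = p") (auto simp: lb lit_val_def)
  qed
qed

lemma H_DL_constant_or_literal:
  assumes "h \<in> H_DL n"
  shows "(\<exists>b. \<forall>x\<in>subcube n \<sigma>. h x = b) \<or>
    (\<exists>r p b. r < n \<and> \<sigma> r = None \<and> (\<forall>x\<in>subcube n \<sigma>. x ! r = p \<longrightarrow> h x = b))"
proof -
  obtain L d where h: "h = dl_fun n L d" and L: "dl_wf n L"
    using assms by (auto simp: H_DL_eq)
  have "\<forall>x\<in>subcube n \<sigma>. dl_fun n L d x = dl_eval L d x"
    using subcube_subset_cube by (auto simp: dl_fun_def)
  then show ?thesis
    using dl_eval_constant_or_literal[OF L, of \<sigma> d] by (simp add: h)
qed

lemma H_DL_literal_towards_constant:
  assumes "h \<in> H_DL n"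
    and "0 < card {x\<in>subcube n \<sigma>. h x \<noteq> b}"
    and "2 * card {x\<in>subcube n \<sigma>. h x \<noteq> b} < card (subcube n \<sigma>)"
  shows "\<exists>r p. r < n \<and> \<sigma> r = None \<and> (\<forall>x\<in>subcube n \<sigma>. x ! r = p \<longrightarrow> h x = b)"
  using H_DL_constant_or_literal[OF assms(1), of \<sigma>]
proof
  assume "\<exists>b'. \<forall>x\<in>subcube n \<sigma>. h x = b'"
  then obtain b' where "\<forall>x\<in>subcube n \<sigma>. h x = b'" ..
  then have "{x\<in>subcube n \<sigma>. h x \<noteq> b} = (if b' = b then {} else subcube n \<sigma>)"
    by auto
  with assms(2,3) show ?thesis
    by (simp split: if_splits)
next
  assume "\<exists>r p b'. r < n \<and> \<sigma> r = None \<and> (\<forall>x\<in>subcube n \<sigma>. x ! r = p \<longrightarrow> h x = b')"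
  then obtain r p b' where r: "r < n" "\<sigma> r = None"
    and fixed: "\<forall>x\<in>subcube n \<sigma>. x ! r = p \<longrightarrow> h x = b'"
    by blast
  have "b' = b"
  proof (rule ccontr)
    assume "b' \<noteq> b"
    with fixed r have "subcube n (\<sigma>(r := Some p)) \<subseteq> {x\<in>subcube n \<sigma>. h x \<noteq> b}"
      by (auto simp: subcube_fix)
    then have "card (subcube n (\<sigma>(r := Some p))) \<le> card {x\<in>subcube n \<sigma>. h x \<noteq> b}"
      by (intro card_mono) (simp_all add: finite_subcube)
    with assms(3) card_subcube_halves[of r n \<sigma> p] r show False
      by linarith
  qed
  with r fixed show ?thesis
    by blast
qed

lemma disagreements_in_other_half:
  assumes "r < n" "\<sigma> r = None" "\<forall>x\<in>subcube n \<sigma>. x ! r = p \<longrightarrow> h x = b"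
  shows "{x\<in>subcube n (\<sigma>(r := Some (\<not> p))). h x \<noteq> b} = {x\<in>subcube n \<sigma>. h x \<noteq> b}"
  using assms by (auto simp: subcube_fix)

lemma disagreements_dl_cons_subset:
  assumes "r < n" "\<sigma> r = None"
  shows "{x\<in>subcube n \<sigma>. h x \<noteq> dl_eval (((r, p), b) # L) d x}
    \<subseteq> {x\<in>subcube n (\<sigma>(r := Some p)). h x \<noteq> b}
      \<union> {x\<in>subcube n (\<sigma>(r := Some (\<not> p))). h x \<noteq> dl_eval L d x}"
  using assms by (auto simp: subcube_fix lit_val_def)

lemma card_disagreements_dl_cons_le:
  assumes "r < n" "\<sigma> r = None" "\<forall>x\<in>subcube n \<sigma>. x ! r = p \<longrightarrow> h x = b"
  shows "card {x\<in>subcube n \<sigma>. h x \<noteq> dl_eval (((r, p), b) # L) d x}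
    \<le> card {x\<in>subcube n (\<sigma>(r := Some (\<not> p))). h x \<noteq> dl_eval L d x}"
proof (rule card_mono)
  show "{x\<in>subcube n \<sigma>. h x \<noteq> dl_eval (((r, p), b) # L) d x}
      \<subseteq> {x\<in>subcube n (\<sigma>(r := Some (\<not> p))). h x \<noteq> dl_eval L d x}"
    using assms by (auto simp: subcube_fix lit_val_def)
qed (rule finite_subset[OF _ finite_subcube], blast)

lemma pigeonhole_common_witness:
  assumes "finite K" "K \<noteq> {}" "finite A" "\<forall>a\<in>A. \<exists>k\<in>K. Q a k"
  shows "\<exists>k\<in>K. \<exists>A'\<subseteq>A. card A \<le> card K * card A' \<and> (\<forall>a\<in>A'. Q a k)"
proof -
  have "\<forall>a\<in>A. \<exists>k. k \<in> K \<and> Q a k"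
    using assms(4) by blast
  then obtain f where f: "\<forall>a\<in>A. f a \<in> K \<and> Q a (f a)"
    by (rule bchoice[elim_format]) blast
  have "\<exists>k\<in>K. card A \<le> card K * card {a\<in>A. f a = k}"
  proof (rule ccontr)
    assume "\<not> ?thesis"
    then have less: "\<forall>k\<in>K. card K * card {a\<in>A. f a = k} < card A"
      by (simp add: not_le)
    have A_eq: "(\<Union>k\<in>K. {a\<in>A. f a = k}) = A"
      using f by auto
    have "card (\<Union>k\<in>K. {a\<in>A. f a = k}) = (\<Sum>k\<in>K. card {a\<in>A. f a = k})"
      using assms(1,3) by (intro card_UN_disjoint) auto
    then have "card A = (\<Sum>k\<in>K. card {a\<in>A. f a = k})"
      by (simp only: A_eq)
    then have "card K * card A = (\<Sum>k\<in>K. card K * card {a\<in>A. f a = k})"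
      by (simp add: sum_distrib_left)
    also have "\<dots> < (\<Sum>k\<in>K. card A)"
      using less assms(1,2) by (intro sum_strict_mono) simp_all
    finally show False
      by simp
  qed
  then obtain k where "k \<in> K" "card A \<le> card K * card {a\<in>A. f a = k}" ..
  moreover have "\<forall>a\<in>{a\<in>A. f a = k}. Q a k"
    using f by auto
  ultimately show ?thesis
    by (intro bexI[of _ k] exI[of _ "{a\<in>A. f a = k}"]) auto
qed

definition pins :: "nat \<Rightarrow> (nat \<Rightarrow> bool option) \<Rightarrow> (bool list \<Rightarrow> bool) \<Rightarrow> literal option \<times> bool \<Rightarrow> bool" where
  "pins n \<sigma> h lb \<longleftrightarrow> (case fst lb of
     None \<Rightarrow> \<forall>x\<in>subcube n \<sigma>. h x = snd lb
   | Some (r, p) \<Rightarrow> r < n \<and> \<sigma> r = None \<and> (\<forall>x\<in>subcube n \<sigma>. x ! r = p \<longrightarrow> h x = snd lb))"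

definition pin_candidates :: "nat \<Rightarrow> (literal option \<times> bool) set" where
  "pin_candidates n = insert None (Some ` ({..<n} \<times> UNIV)) \<times> UNIV"

lemma finite_pin_candidates: "finite (pin_candidates n)"
  by (simp add: pin_candidates_def)

lemma card_pin_candidates: "card (pin_candidates n) \<le> 4 * n + 4"
proof -
  have "card (insert None (Some ` ({..<n} \<times> (UNIV :: bool set)))) = 2 * n + 1"
    by (simp add: card_image card_cartesian_product image_iff)
  then show ?thesis
    by (simp add: pin_candidates_def card_cartesian_product)
qed

lemma H_DL_pinned:
  assumes "h \<in> H_DL n"
  shows "\<exists>lb\<in>pin_candidates n. pins n \<sigma> h lb"
  using H_DL_constant_or_literal[OF assms, of \<sigma>]
proof
  assume "\<exists>b. \<forall>x\<in>subcube n \<sigma>. h x = b"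
  then obtain b where "\<forall>x\<in>subcube n \<sigma>. h x = b" ..
  then show ?thesis
    by (intro bexI[of _ "(None, b)"]) (auto simp: pins_def pin_candidates_def)
next
  assume "\<exists>r p b. r < n \<and> \<sigma> r = None \<and> (\<forall>x\<in>subcube n \<sigma>. x ! r = p \<longrightarrow> h x = b)"
  then obtain r p b where "r < n" "\<sigma> r = None" "\<forall>x\<in>subcube n \<sigma>. x ! r = p \<longrightarrow> h x = b"
    by blast
  then show ?thesis
    by (intro bexI[of _ "(Some (r, p), b)"]) (auto simp: pins_def pin_candidates_def)
qed

lemma pinned_dl_cons_error_le:
  assumes "\<forall>h\<in>K. pins n \<sigma> h (Some (r, p), b)"
    and "\<forall>h\<in>K. 2 ^ j * card {x\<in>subcube n (\<sigma>(r := Some (\<not> p))). h x \<noteq> dl_eval L d x}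
      \<le> card (subcube n (\<sigma>(r := Some (\<not> p))))"
  shows "\<forall>h\<in>K. 2 ^ Suc j * card {x\<in>subcube n \<sigma>. h x \<noteq> dl_eval (((r, p), b) # L) d x}
    \<le> card (subcube n \<sigma>)"
proof
  fix h assume "h \<in> K"
  then have "r < n" "\<sigma> r = None" "\<forall>x\<in>subcube n \<sigma>. x ! r = p \<longrightarrow> h x = b"
    using assms(1) by (auto simp: pins_def)
  then have "2 ^ Suc j * card {x\<in>subcube n \<sigma>. h x \<noteq> dl_eval (((r, p), b) # L) d x}
      \<le> 2 * (2 ^ j * card {x\<in>subcube n (\<sigma>(r := Some (\<not> p))). h x \<noteq> dl_eval L d x})"
    using card_disagreements_dl_cons_le[of r n \<sigma> p h b L d] by simp
  also have "\<dots> \<le> 2 * card (subcube n (\<sigma>(r := Some (\<not> p))))"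
    using assms(2) \<open>h \<in> K\<close> by simp
  also have "\<dots> = card (subcube n \<sigma>)"
    using card_subcube_halves[of r n \<sigma> "\<not> p"] \<open>r < n\<close> \<open>\<sigma> r = None\<close> by simp
  finally show "2 ^ Suc j * card {x\<in>subcube n \<sigma>. h x \<noteq> dl_eval (((r, p), b) # L) d x} \<le> card (subcube n \<sigma>)" .
qed

lemma H_DL_pinned_subfamily:
  assumes "finite M" "M \<subseteq> H_DL n"
  obtains l b G where "G \<subseteq> M" "card M \<le> (4 * n + 4) * card G" "\<forall>h\<in>G. pins n \<sigma> h (l, b)"
proof -
  have "pin_candidates n \<noteq> {}"
    by (simp add: pin_candidates_def)
  moreover have "\<forall>h\<in>M. \<exists>lb\<in>pin_candidates n. pins n \<sigma> h lb"
    using assms(2) by (auto intro: H_DL_pinned)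
  ultimately have "\<exists>lb\<in>pin_candidates n. \<exists>G\<subseteq>M. card M \<le> card (pin_candidates n) * card G \<and>
      (\<forall>h\<in>G. pins n \<sigma> h lb)"
    by (rule pigeonhole_common_witness[OF finite_pin_candidates _ assms(1)])
  then obtain l b G where "G \<subseteq> M" "card M \<le> card (pin_candidates n) * card G"
    and "\<forall>h\<in>G. pins n \<sigma> h (l, b)"
    by auto
  moreover have "card (pin_candidates n) * card G \<le> (4 * n + 4) * card G"
    using card_pin_candidates by (rule mult_le_mono1)
  ultimately show thesis
    using that le_trans by blast
qed

lemma dl_approximates_subfamily:
  assumes "finite M" "M \<subseteq> H_DL n"
  shows "\<exists>L d M'. dl_wf n L \<and> M' \<subseteq> M \<and> card M \<le> card M' * (4 * n + 4) ^ j \<and>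
    (\<forall>h\<in>M'. 2 ^ j * card {x\<in>subcube n \<sigma>. h x \<noteq> dl_eval L d x} \<le> card (subcube n \<sigma>))"
  using assms
proof (induction j arbitrary: \<sigma> M)
  case 0
  have "\<forall>h\<in>M. card {x\<in>subcube n \<sigma>. h x \<noteq> dl_eval [] False x} \<le> card (subcube n \<sigma>)"
    using finite_subcube by (auto intro: card_mono)
  then show ?case
    by (intro exI[of _ "[]"] exI[of _ False] exI[of _ M]) auto
next
  case (Suc j)
  let ?C = "subcube n \<sigma>"
  obtain l b G where G: "G \<subseteq> M" and M_le: "card M \<le> (4 * n + 4) * card G"
    and pinned: "\<forall>h\<in>G. pins n \<sigma> h (l, b)"
    using H_DL_pinned_subfamily[OF Suc.prems] .
  show ?case
  proof (cases l)
    case None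
    then have "\<forall>h\<in>G. card {x\<in>?C. h x \<noteq> dl_eval [] b x} = 0"
      using pinned by (simp add: pins_def card_eq_0_iff)
    moreover have "card M \<le> card G * (4 * n + 4) ^ Suc j"
      using M_le by (rule le_trans) simp
    ultimately show ?thesis
      using G by (intro exI[of _ "[]"] exI[of _ b] exI[of _ G]) simp
  next
    case (Some rp)
    obtain r p where rp: "rp = (r, p)"
      by (cases rp)
    show ?thesis
    proof (cases "G = {}")
      case True
      then show ?thesis
        using M_le Suc.prems(1) by (intro exI[of _ "[]"] exI[of _ False] exI[of _ "{}"]) auto
    next
      case False
      with pinned have "r < n" "\<sigma> r = None"
        by (auto simp: pins_def Some rp)
      let ?\<sigma>' = "\<sigma>(r := Some (\<not> p))"
      have "finite G" "G \<subseteq> H_DL n"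
        using G Suc.prems finite_subset by auto
      from Suc.IH[OF this, of ?\<sigma>'] obtain L d M' where "dl_wf n L" "M' \<subseteq> G"
        and M'_large: "card G \<le> card M' * (4 * n + 4) ^ j"
        and M'_close: "\<forall>h\<in>M'. 2 ^ j * card {x\<in>subcube n ?\<sigma>'. h x \<noteq> dl_eval L d x} \<le> card (subcube n ?\<sigma>')"
        by blast
      have "card M \<le> (4 * n + 4) * (card M' * (4 * n + 4) ^ j)"
        using M_le mult_le_mono2[OF M'_large] by (rule le_trans)
      moreover have "\<forall>h\<in>M'. 2 ^ Suc j * card {x\<in>?C. h x \<noteq> dl_eval (((r, p), b) # L) d x} \<le> card ?C"
        using pinned M'_close \<open>M' \<subseteq> G\<close> by (intro pinned_dl_cons_error_le) (auto simp: Some rp)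
      ultimately show ?thesis
        using \<open>dl_wf n L\<close> \<open>r < n\<close> \<open>M' \<subseteq> G\<close> G
        by (intro exI[of _ "((r, p), b) # L"] exI[of _ d] exI[of _ M']) (auto simp: ac_simps)
    qed
  qed
qed

section \<open>Densities\<close>

lemma edges_eq_sum:
  assumes "finite S" "finite U"
  shows "edges S U = (\<Sum>h\<in>U. card {x\<in>S. h x})"
proof -
  have "{(x, h). x \<in> S \<and> h \<in> U \<and> h x} = (\<lambda>(h, x). (x, h)) ` (SIGMA h:U. {x\<in>S. h x})"
    by auto
  moreover have "inj_on (\<lambda>(h, x). (x, h)) (SIGMA h:U. {x\<in>S. h x})"
    by (auto simp: inj_on_def)
  ultimately have "edges S U = card (SIGMA h:U. {x\<in>S. h x})"
    by (simp add: edges_def card_image)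
  also have "\<dots> = (\<Sum>h\<in>U. card {x\<in>S. h x})"
    using assms by (simp add: card_SigmaI)
  finally show ?thesis .
qed

lemma density_le:
  assumes "finite S" "finite U" "S \<noteq> {}" "U \<noteq> {}"
    and "\<forall>h\<in>U. real (card {x\<in>S. h x}) \<le> c * real (card S)"
  shows "density S U \<le> c"
proof -
  have "real (edges S U) = (\<Sum>h\<in>U. real (card {x\<in>S. h x}))"
    by (simp add: edges_eq_sum[OF assms(1,2)])
  also have "\<dots> \<le> (\<Sum>h\<in>U. c * real (card S))"
    using assms(5) by (intro sum_mono) simp
  finally have "real (edges S U) \<le> c * (real (card S) * real (card U))"
    by (simp add: ac_simps)
  moreover have "real (card S) * real (card U) > 0"
    using assms(1-4) by (simp add: card_gt_0_iff)
  ultimately show ?thesis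
    by (simp add: density_def pos_divide_le_eq)
qed

lemma density_ge:
  assumes "finite S" "finite U" "S \<noteq> {}" "U \<noteq> {}"
    and "\<forall>h\<in>U. c * real (card S) \<le> real (card {x\<in>S. h x})"
  shows "c \<le> density S U"
proof -
  have "(\<Sum>h\<in>U. c * real (card S)) \<le> (\<Sum>h\<in>U. real (card {x\<in>S. h x}))"
    using assms(5) by (intro sum_mono) simp
  also have "\<dots> = real (edges S U)"
    by (simp add: edges_eq_sum[OF assms(1,2)])
  finally have "c * (real (card S) * real (card U)) \<le> real (edges S U)"
    by (simp add: ac_simps)
  moreover have "real (card S) * real (card U) > 0"
    using assms(1-4) by (simp add: card_gt_0_iff)
  ultimately show ?thesis
    by (simp add: density_def pos_le_divide_eq)
qed

lemma card_filter_add_card_filter_not: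
  "finite S \<Longrightarrow> card {x\<in>S. P x} + card {x\<in>S. \<not> P x} = card S"
  by (subst card_Un_disjoint[symmetric]) (auto intro: arg_cong[where f = card])

lemma density_gap_constant_far:
  assumes fin: "finite S" "finite G" "finite F" and "S \<noteq> {}" "G \<noteq> {}" "F \<noteq> {}"
    and G: "\<forall>h\<in>G. \<forall>x\<in>S. h x = b"
    and F: "\<forall>h\<in>F. a * real (card S) \<le> real (card {x\<in>S. h x \<noteq> b})"
  shows "a \<le> \<bar>density S G - density S F\<bar>"
proof (cases b)
  case True
  have "\<forall>h\<in>G. {x\<in>S. h x} = S"
    using G True by auto
  then have "1 \<le> density S G"
    using assms(1-5) by (intro density_ge) auto
  moreover have "density S F \<le> 1 - a"
  proof (rule density_le)
    show "\<forall>h\<in>F. real (card {x\<in>S. h x}) \<le> (1 - a) * real (card S)"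
    proof
      fix h assume "h \<in> F"
      have "card {x\<in>S. h x} + card {x\<in>S. \<not> h x} = card S"
        by (rule card_filter_add_card_filter_not[OF fin(1)])
      moreover have "a * real (card S) \<le> real (card {x\<in>S. \<not> h x})"
        using F \<open>h \<in> F\<close> True by simp
      ultimately show "real (card {x\<in>S. h x}) \<le> (1 - a) * real (card S)"
        by (simp add: algebra_simps flip: of_nat_add)
    qed
  qed (use assms(1-6) in auto)
  ultimately show ?thesis
    by linarith
next
  case False
  have "density S G \<le> 0"
    using G False assms(1-5) by (intro density_le) auto
  moreover have "a \<le> density S F"
    using F False assms(1-6) by (intro density_ge) auto
  ultimately show ?thesis
    by linarith
qed

section \<open>Families admitting no separation\<close>

locale unseparated =
  fixes X :: "'x set" and T :: "('x \<Rightarrow> bool) set" and \<alpha> :: real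
  assumes finite_X: "finite X" and X_nonempty: "X \<noteq> {}"
    and finite_T: "finite T" and T_nonempty: "T \<noteq> {}"
    and alpha_pos: "0 < \<alpha>"
    and no_separation: "\<And>S T0 T1. S \<subseteq> X \<Longrightarrow> T0 \<subseteq> T \<Longrightarrow> T1 \<subseteq> T \<Longrightarrow> T0 \<inter> T1 = {} \<Longrightarrow>
      \<alpha> * real (card X) \<le> real (card S) \<Longrightarrow> \<alpha> * real (card T) \<le> real (card T0) \<Longrightarrow>
      \<alpha> * real (card T) \<le> real (card T1) \<Longrightarrow> \<bar>density S T0 - density S T1\<bar> < \<alpha>"
begin

lemma card_T_pos: "real (card T) > 0"
  using finite_T T_nonempty by (simp add: card_gt_0_iff)

text \<open>Otherwise \<open>G\<close> and \<open>F\<close> would be separated on \<open>S\<close>.\<close>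

lemma card_far_from_constant_lt:
  assumes S: "S \<subseteq> X" "\<alpha> * real (card X) \<le> real (card S)"
    and G: "G \<subseteq> T" "\<alpha> * real (card T) \<le> real (card G)" "\<forall>h\<in>G. \<forall>x\<in>S. h x = b"
    and F: "F \<subseteq> T" "\<forall>h\<in>F. \<alpha> * real (card S) \<le> real (card {x\<in>S. h x \<noteq> b})"
  shows "real (card F) < \<alpha> * real (card T)"
proof (rule ccontr)
  assume "\<not> ?thesis"
  then have F_large: "\<alpha> * real (card T) \<le> real (card F)"
    by simp
  have fin: "finite S" "finite G" "finite F"
    using S(1) G(1) F(1) finite_subset finite_X finite_T by blast+
  have "\<alpha> * real (card X) > 0"
    using alpha_pos finite_X X_nonempty by (simp add: card_gt_0_iff)
  with S(2) have S_pos: "\<alpha> * real (card S) > 0" "S \<noteq> {}"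
    using alpha_pos by auto
  have "\<alpha> * real (card T) > 0"
    using alpha_pos card_T_pos by simp
  with G(2) F_large have "G \<noteq> {}" "F \<noteq> {}"
    by auto
  have "G \<inter> F = {}"
  proof (rule ccontr)
    assume "G \<inter> F \<noteq> {}"
    then obtain h where "h \<in> G" "h \<in> F"
      by blast
    with G(3) have "{x\<in>S. h x \<noteq> b} = {}"
      by auto
    moreover have "\<alpha> * real (card S) \<le> real (card {x\<in>S. h x \<noteq> b})"
      using F(2) \<open>h \<in> F\<close> by blast
    ultimately show False
      using S_pos by (simp only: card.empty of_nat_0)
  qed
  then have "\<bar>density S G - density S F\<bar> < \<alpha>"
    using no_separation[OF S(1) G(1) F(1) _ S(2) G(2) F_large] by blast
  moreover have "\<alpha> \<le> \<bar>density S G - density S F\<bar>"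
    using fin \<open>S \<noteq> {}\<close> \<open>G \<noteq> {}\<close> \<open>F \<noteq> {}\<close> G(3) F(2) by (rule density_gap_constant_far)
  ultimately show False
    by linarith
qed

end

lemma separable_if_unseparated_tight:
  assumes "finite X" "X \<noteq> {}" "H \<noteq> {}" "0 < \<alpha>"
    and "\<And>T. T \<subseteq> H \<Longrightarrow> unseparated X T \<alpha> \<Longrightarrow> tight X H \<alpha> \<epsilon> T"
  shows "separable X H \<alpha> \<epsilon>"
  unfolding separable_def
proof (intro allI impI)
  fix T assume T: "T \<subseteq> H" and not_tight: "\<not> tight X H \<alpha> \<epsilon> T"
  have "card T \<noteq> 0"
    using not_tight assms(3) unfolding tight_def by fastforce
  then have "finite T" "T \<noteq> {}"
    using card_gt_0_iff by blast+
  show "\<exists>S T0 T1. S \<subseteq> X \<and> T0 \<subseteq> T \<and> T1 \<subseteq> T \<and> T0 \<inter> T1 = {} \<and>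
      \<alpha> * real (card X) \<le> real (card S) \<and>
      \<alpha> * real (card T) \<le> real (card T0) \<and> \<alpha> * real (card T) \<le> real (card T1) \<and>
      \<alpha> \<le> \<bar>density S T0 - density S T1\<bar>"
  proof (rule ccontr)
    assume no_separation: "\<not> ?thesis"
    have "unseparated X T \<alpha>"
      using assms(1,2,4) \<open>finite T\<close> \<open>T \<noteq> {}\<close> no_separation
      by unfold_locales (meson not_le)+
    with T not_tight assms(5) show False
      by blast
  qed
qed

section \<open>Amplification for decision lists\<close>

lemma sum_powers_atMost_Suc:
  "(\<Sum>i\<le>Suc j. (m :: real) ^ i) = 1 + m * (\<Sum>i\<le>j. m ^ i)"
  unfolding sum.atMost_Suc_shift by (simp add: sum_distrib_left)

locale dl_unseparated = unseparated "cube n" T \<alpha>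
  for n :: nat and T :: "(bool list \<Rightarrow> bool) set" and \<alpha> :: real +
  assumes n_pos: "1 \<le> n" and alpha_le: "\<alpha> \<le> 1 / (200 * real n ^ 4)"
    and T_sub_H_DL: "T \<subseteq> H_DL n"
begin

abbreviation N :: real where
  "N \<equiv> real (card (cube n))"

lemma N_pos: "0 < N"
  using card_cube_pos[of n] by simp

lemma alpha_n4_le: "\<alpha> * real n ^ 4 \<le> 1 / 200"
proof -
  have "real n ^ 4 > 0"
    using n_pos by simp
  then show ?thesis
    using alpha_le by (simp add: le_divide_eq mult.commute)
qed

lemma real_n_power_le_n4: "k \<le> 4 \<Longrightarrow> real n ^ k \<le> real n ^ 4"
  using n_pos by (intro power_increasing) auto

lemma real_n_power_alpha_le:
  assumes "k \<le> 4"
  shows "real n ^ k * \<alpha> \<le> 1 / 200"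
proof -
  from assms have "real n ^ k * \<alpha> \<le> real n ^ 4 * \<alpha>"
    using real_n_power_le_n4 alpha_pos by (intro mult_right_mono) auto
  then show ?thesis
    using alpha_n4_le by (simp add: mult.commute)
qed

lemma alpha_le_1_200: "\<alpha> \<le> 1 / 200"
  using real_n_power_alpha_le[of 0] by simp

lemma branching_alpha_le: "(4 * real n + 4) * \<alpha> \<le> 8 / 200"
  using real_n_power_alpha_le[of 1] alpha_le_1_200 by (simp add: algebra_simps)

text \<open>The fraction of \<open>T\<close> discarded each time a variable is fixed.\<close>

definition loss :: real where
  "loss = (\<Sum>i\<le>2. (2 * real n) ^ i) * \<alpha>"

lemma loss_nonneg: "0 \<le> loss"
  using alpha_pos by (simp add: loss_def sum_nonneg)

lemma n_loss_le: "real n * loss \<le> 7 / 200"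
proof -
  have "real n * loss = (real n + 2 * real n ^ 2 + 4 * real n ^ 3) * \<alpha>"
    by (simp add: loss_def numeral_2_eq_2 algebra_simps power2_eq_square power3_eq_cube)
  also have "\<dots> \<le> 7 * real n ^ 4 * \<alpha>"
  proof (intro mult_right_mono)
    have "real n \<le> real n ^ 4" "real n ^ 2 \<le> real n ^ 4" "real n ^ 3 \<le> real n ^ 4"
      using real_n_power_le_n4[of 1] real_n_power_le_n4[of 2] real_n_power_le_n4[of 3] by simp_all
    then show "real n + 2 * real n ^ 2 + 4 * real n ^ 3 \<le> 7 * real n ^ 4"
      by linarith
  qed (use alpha_pos in simp)
  finally show ?thesis
    using alpha_n4_le by (simp add: mult.commute)
qed

lemma branching_sq_alpha_le: "(4 * real n + 4) ^ 2 * \<alpha> \<le> 64 / 200"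
proof -
  have "real n \<le> real n ^ 2"
    using n_pos by (simp add: power2_eq_square)
  then have "4 * real n + 4 \<le> 8 * real n ^ 2"
    using n_pos by linarith
  then have "(4 * real n + 4) ^ 2 \<le> (8 * real n ^ 2) ^ 2"
    by (intro power_mono) auto
  also have "\<dots> = 64 * real n ^ 4"
    by (simp add: power_mult_distrib flip: power_mult)
  finally have "(4 * real n + 4) ^ 2 * \<alpha> \<le> 64 * (\<alpha> * real n ^ 4)"
    using alpha_pos by (simp add: mult_right_mono algebra_simps)
  then show ?thesis
    using alpha_n4_le by linarith
qed

lemma pinned_by_free_literal:
  assumes "h \<in> T" "0 < card {x\<in>subcube n \<sigma>. h x \<noteq> b}"
    and "real (card {x\<in>subcube n \<sigma>. h x \<noteq> b}) < \<alpha> * real (card (subcube n \<sigma>))"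
  shows "\<exists>l\<in>Some ` ({..<n} \<times> UNIV). pins n \<sigma> h (l, b)"
proof -
  have "\<alpha> * real (card (subcube n \<sigma>)) \<le> 1 / 200 * real (card (subcube n \<sigma>))"
    using alpha_le_1_200 by (intro mult_right_mono) simp_all
  with assms(3) have "real (card {x\<in>subcube n \<sigma>. h x \<noteq> b}) < 1 / 200 * real (card (subcube n \<sigma>))"
    by linarith
  then have "2 * card {x\<in>subcube n \<sigma>. h x \<noteq> b} < card (subcube n \<sigma>)"
    by linarith
  then obtain r p where "r < n" "\<sigma> r = None" "\<forall>x\<in>subcube n \<sigma>. x ! r = p \<longrightarrow> h x = b"
    using H_DL_literal_towards_constant[of h n \<sigma> b] assms(1,2) T_sub_H_DL by auto
  then show ?thesis
    by (intro bexI[of _ "Some (r, p)"]) (auto simp: pins_def)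
qed

text \<open>Hypotheses at distance at least \<open>\<alpha> |C|\<close> from \<open>b\<close> are few by \<open>card_far_from_constant_lt\<close>; the
  others are near \<open>b\<close>, hence pinned to \<open>b\<close> by a free literal, and a \<open>1 / 2n\<close> fraction of them
  share the literal.\<close>

lemma far_family_decomposes:
  assumes G: "G \<subseteq> T" "\<alpha> * real (card T) \<le> real (card G)" "\<forall>h\<in>G. \<forall>x\<in>subcube n \<sigma>. h x = b"
    and C_large: "\<alpha> * N \<le> real (card (subcube n \<sigma>))"
    and F: "F \<subseteq> T" "\<forall>h\<in>F. \<alpha> * real (card (subcube n \<sigma>)) \<le> c * real (card {x\<in>subcube n \<sigma>. h x \<noteq> b})"
  obtains l K where "K \<subseteq> F" "real (card F) < \<alpha> * real (card T) + 2 * real n * real (card K)"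
    "\<forall>h\<in>K. pins n \<sigma> h (Some l, b)"
proof -
  let ?C = "subcube n \<sigma>"
  define F0 where "F0 = {h\<in>F. \<alpha> * real (card ?C) \<le> real (card {x\<in>?C. h x \<noteq> b})}"
  have F0_small: "real (card F0) < \<alpha> * real (card T)"
    using F(1) by (intro card_far_from_constant_lt[OF subcube_subset_cube C_large G]) (auto simp: F0_def)
  have "finite F"
    using finite_subset[OF F(1) finite_T] .
  have "0 < \<alpha> * N"
    using alpha_pos N_pos by simp
  with C_large have C_pos: "0 < \<alpha> * real (card ?C)"
    using alpha_pos by simp
  have "\<forall>h\<in>F - F0. \<exists>l\<in>Some ` ({..<n} \<times> UNIV). pins n \<sigma> h (l, b)"
  proof
    fix h assume h: "h \<in> F - F0"
    have "\<alpha> * real (card ?C) \<le> c * real (card {x\<in>?C. h x \<noteq> b})"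
      using F(2) h by blast
    with C_pos have "0 < card {x\<in>?C. h x \<noteq> b}"
      by (cases "card {x\<in>?C. h x \<noteq> b}") auto
    moreover have "h \<in> T" "real (card {x\<in>?C. h x \<noteq> b}) < \<alpha> * real (card ?C)"
      using h F(1) by (auto simp: F0_def not_le)
    ultimately show "\<exists>l\<in>Some ` ({..<n} \<times> UNIV). pins n \<sigma> h (l, b)"
      by (intro pinned_by_free_literal)
  qed
  moreover have "finite (Some ` ({..<n} \<times> (UNIV :: bool set)))" "Some ` ({..<n} \<times> (UNIV :: bool set)) \<noteq> {}"
    using n_pos by (auto simp: lessThan_empty_iff)
  ultimately have "\<exists>l\<in>Some ` ({..<n} \<times> UNIV). \<exists>K\<subseteq>F - F0.
      card (F - F0) \<le> card (Some ` ({..<n} \<times> (UNIV :: bool set))) * card K \<and> (\<forall>h\<in>K. pins n \<sigma> h (l, b))"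
    using \<open>finite F\<close> by (intro pigeonhole_common_witness) auto
  then obtain l K where K: "K \<subseteq> F - F0" "card (F - F0) \<le> 2 * n * card K"
    and pinned: "\<forall>h\<in>K. pins n \<sigma> h (Some l, b)"
    by (auto simp: card_image card_cartesian_product ac_simps)
  have "F0 \<subseteq> F"
    by (auto simp: F0_def)
  then have "card F = card F0 + card (F - F0)"
    using \<open>finite F\<close> by (simp add: card_Diff_subset card_mono finite_subset)
  moreover have "real (card (F - F0)) \<le> 2 * real n * real (card K)"
    using of_nat_mono[OF K(2), where 'a = real] by simp
  ultimately show thesis
    using that[of K l] K(1) pinned F0_small by auto
qed

lemma far_in_other_half:
  assumes "\<forall>h\<in>K. pins n \<sigma> h (Some (r, p), b)"
    and "\<forall>h\<in>K. a * real (card (subcube n \<sigma>)) \<le> 2 * c * real (card {x\<in>subcube n \<sigma>. h x \<noteq> b})"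
  shows "\<forall>h\<in>K. a * real (card (subcube n (\<sigma>(r := Some (\<not> p)))))
    \<le> c * real (card {x\<in>subcube n (\<sigma>(r := Some (\<not> p))). h x \<noteq> b})"
proof
  fix h assume "h \<in> K"
  then have "r < n" "\<sigma> r = None" "\<forall>x\<in>subcube n \<sigma>. x ! r = p \<longrightarrow> h x = b"
    using assms(1) by (auto simp: pins_def)
  then show "a * real (card (subcube n (\<sigma>(r := Some (\<not> p)))))
      \<le> c * real (card {x\<in>subcube n (\<sigma>(r := Some (\<not> p))). h x \<noteq> b})"
    using assms(2) \<open>h \<in> K\<close> card_subcube_halves[of r n \<sigma> "\<not> p"] disagreements_in_other_half[of r n \<sigma> p h b]
    by simp
qed

text \<open>Amplification: a hypothesis pinned to \<open>b\<close> by a free literal has all its disagreements with \<open>b\<close>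
  in the opposite half of the subcube, where they are twice as dense.\<close>

lemma card_far_family_lt:
  assumes G: "G \<subseteq> T" "\<alpha> * real (card T) \<le> real (card G)"
    and "\<forall>h\<in>G. \<forall>x\<in>subcube n \<sigma>. h x = b"
    and "2 ^ j * \<alpha> * N \<le> real (card (subcube n \<sigma>))"
    and "F \<subseteq> T"
    and "\<forall>h\<in>F. \<alpha> * real (card (subcube n \<sigma>)) \<le> 2 ^ j * real (card {x\<in>subcube n \<sigma>. h x \<noteq> b})"
  shows "real (card F) < (\<Sum>i\<le>j. (2 * real n) ^ i) * \<alpha> * real (card T)"
  using assms(3-)
proof (induction j arbitrary: \<sigma> F)
  case 0
  then show ?case
    using card_far_from_constant_lt[OF subcube_subset_cube _ G] by simp
next
  case (Suc j)
  let ?C = "subcube n \<sigma>"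
  have "\<alpha> * N \<le> 2 ^ Suc j * (\<alpha> * N)"
    using one_le_power[of "2 :: real" "Suc j"] alpha_pos N_pos by simp
  then have C_large: "\<alpha> * N \<le> real (card ?C)"
    using Suc.prems(2) by (simp add: mult.assoc)
  obtain rp K where "K \<subseteq> F" and F_le: "real (card F) < \<alpha> * real (card T) + 2 * real n * real (card K)"
    and pinned: "\<forall>h\<in>K. pins n \<sigma> h (Some rp, b)"
    by (rule far_family_decomposes[OF G Suc.prems(1) C_large Suc.prems(3,4)])
  obtain r p where rp: "rp = (r, p)"
    by (cases rp)
  have K_small: "real (card K) \<le> (\<Sum>i\<le>j. (2 * real n) ^ i) * \<alpha> * real (card T)"
  proof (cases "K = {}")
    case True
    then show ?thesis
      using alpha_pos by (simp add: sum_nonneg)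
  next
    case False
    then have "r < n" "\<sigma> r = None"
      using pinned by (auto simp: pins_def rp)
    let ?\<sigma>' = "\<sigma>(r := Some (\<not> p))"
    show ?thesis
    proof (rule less_imp_le, rule Suc.IH)
      show "\<forall>h\<in>G. \<forall>x\<in>subcube n ?\<sigma>'. h x = b"
        using Suc.prems(1) subcube_fix_subset[of r n \<sigma>] \<open>r < n\<close> \<open>\<sigma> r = None\<close> by blast
      show "2 ^ j * \<alpha> * N \<le> real (card (subcube n ?\<sigma>'))"
        using Suc.prems(2) card_subcube_halves[of r n \<sigma> "\<not> p"] \<open>r < n\<close> \<open>\<sigma> r = None\<close> by simp
      show "K \<subseteq> T"
        using \<open>K \<subseteq> F\<close> Suc.prems(3) by blast
      show "\<forall>h\<in>K. \<alpha> * real (card (subcube n ?\<sigma>')) \<le> 2 ^ j * real (card {x\<in>subcube n ?\<sigma>'. h x \<noteq> b})"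
        using pinned Suc.prems(4) \<open>K \<subseteq> F\<close> by (intro far_in_other_half) (auto simp: rp)
    qed
  qed
  then have "2 * real n * real (card K) \<le> 2 * real n * ((\<Sum>i\<le>j. (2 * real n) ^ i) * \<alpha> * real (card T))"
    by (rule mult_left_mono) simp
  then have "real (card F) < \<alpha> * real (card T) + 2 * real n * ((\<Sum>i\<le>j. (2 * real n) ^ i) * \<alpha> * real (card T))"
    using F_le by linarith
  then show ?case
    unfolding sum_powers_atMost_Suc by (simp add: algebra_simps)
qed

section \<open>The approximating decision list\<close>

definition threshold :: "real \<Rightarrow> real" where
  "threshold q = (if 4 * \<alpha> * N \<le> q then \<alpha> * q / 4 else \<alpha> * q)"

text \<open>The error allowed on a subcube of \<open>c\<close> points. Halving a subcube of \<open>2 q\<close> points costs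
  \<open>threshold q\<close>: \<open>\<alpha> q / 4\<close> while \<open>q \<ge> 4 \<alpha> N\<close>, summing geometrically to at most \<open>\<alpha> c / 4\<close>, and \<open>\<alpha> q\<close>
  below, summing to at most \<open>\<alpha> min c (8 \<alpha> N)\<close>; the final subcube costs less than \<open>\<alpha> N / 2\<close>.\<close>

definition error_budget :: "real \<Rightarrow> real" where
  "error_budget c = \<alpha> * (c / 4 + N / 2 + min c (8 * \<alpha> * N))"

lemma error_budget_ge:
  assumes "0 \<le> c"
  shows "\<alpha> * N / 2 \<le> error_budget c"
proof -
  from assms have "N / 2 \<le> c / 4 + N / 2 + min c (8 * \<alpha> * N)"
    using alpha_pos N_pos by simp
  then show ?thesis
    unfolding error_budget_def using alpha_pos mult_left_mono by fastforce
qed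

lemma error_budget_step:
  assumes "\<alpha> * N \<le> q"
  shows "threshold q + error_budget q \<le> error_budget (2 * q)"
proof -
  have "0 < \<alpha> * N"
    using alpha_pos N_pos by simp
  then have "0 \<le> q"
    using assms by linarith
  show ?thesis
  proof (cases "4 * \<alpha> * N \<le> q")
    case True
    have "q / 4 + (q / 4 + N / 2 + min q (8 * \<alpha> * N)) \<le> 2 * q / 4 + N / 2 + min (2 * q) (8 * \<alpha> * N)"
      using \<open>0 \<le> q\<close> by simp
    then show ?thesis
      using True alpha_pos mult_left_mono[of _ _ \<alpha>]
      by (fastforce simp: threshold_def error_budget_def algebra_simps)
  next
    case False
    then have "min q (8 * \<alpha> * N) = q" "min (2 * q) (8 * \<alpha> * N) = 2 * q"
      using \<open>0 < \<alpha> * N\<close> by auto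
    then show ?thesis
      using False alpha_pos \<open>0 \<le> q\<close> by (simp add: threshold_def error_budget_def algebra_simps)
  qed
qed

lemma error_budget_cube: "error_budget N \<le> \<alpha> * N"
proof -
  have "min N (8 * \<alpha> * N) \<le> 8 * (1 / 200) * N"
    using alpha_le_1_200 N_pos by (simp add: min.coboundedI2)
  then have "N / 4 + N / 2 + min N (8 * \<alpha> * N) \<le> N"
    by simp
  then show ?thesis
    unfolding error_budget_def using alpha_pos by (simp add: mult_left_mono)
qed

definition approximable :: "(nat \<Rightarrow> bool option) \<Rightarrow> (bool list \<Rightarrow> bool) set \<Rightarrow> bool" where
  "approximable \<sigma> M \<longleftrightarrow> (\<exists>L d M'. dl_wf n L \<and> M' \<subseteq> M \<and>
     (1 - real n * loss) * real (card T) \<le> real (card M') * (4 * real n + 4) ^ 2 \<and>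
     (\<forall>h\<in>M'. real (card {x\<in>subcube n \<sigma>. h x \<noteq> dl_eval L d x})
        \<le> error_budget (real (card (subcube n \<sigma>)))))"

lemma approximable_if_degenerate:
  assumes "free_vars n \<sigma> = {} \<or> real (card (subcube n \<sigma>)) < 2 * \<alpha> * N"
    and "M \<subseteq> T" and "(1 - real n * loss) * real (card T) \<le> real (card M)"
  shows "approximable \<sigma> M"
proof -
  have "finite M" "M \<subseteq> H_DL n"
    using assms(2) finite_T T_sub_H_DL finite_subset by auto
  from dl_approximates_subfamily[OF this, of 2 \<sigma>] obtain L d M' where "dl_wf n L" "M' \<subseteq> M"
    and M'_large: "card M \<le> card M' * (4 * n + 4) ^ 2"
    and M'_close: "\<forall>h\<in>M'. 2 ^ 2 * card {x\<in>subcube n \<sigma>. h x \<noteq> dl_eval L d x} \<le> card (subcube n \<sigma>)"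
    by blast
  have "real (card M) \<le> real (card M' * (4 * n + 4) ^ 2)"
    using M'_large by (rule of_nat_mono)
  then have M'_large_real: "real (card M) \<le> real (card M') * (4 * real n + 4) ^ 2"
    by simp
  moreover have "real (card {x\<in>subcube n \<sigma>. h x \<noteq> dl_eval L d x}) \<le> error_budget (real (card (subcube n \<sigma>)))"
    if "h \<in> M'" for h
  proof -
    let ?e = "card {x\<in>subcube n \<sigma>. h x \<noteq> dl_eval L d x}"
    have "4 * ?e \<le> card (subcube n \<sigma>)"
      using M'_close that by simp
    then have e4: "4 * real ?e \<le> real (card (subcube n \<sigma>))"
      by linarith
    have "real ?e < \<alpha> * N / 2 \<or> ?e = 0"
      using assms(1)
    proof
      assume "free_vars n \<sigma> = {}"
      then have "4 * real ?e \<le> 1"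
        using e4 card_subcube_no_free_vars[of n \<sigma>] by linarith
      then show ?thesis
        by simp
    qed (use e4 in simp)
    moreover have "\<alpha> * N / 2 \<le> error_budget (real (card (subcube n \<sigma>)))"
      by (rule error_budget_ge) simp
    moreover have "0 < \<alpha> * N / 2"
      using alpha_pos N_pos by simp
    ultimately show ?thesis
      by (elim disjE) simp_all
  qed
  ultimately show ?thesis
    unfolding approximable_def using assms(3) \<open>dl_wf n L\<close> \<open>M' \<subseteq> M\<close>
    by (intro exI[of _ L] exI[of _ d] exI[of _ M']) simp
qed

lemma popular_literal:
  assumes "free_vars n \<sigma> \<noteq> {}" "M \<subseteq> T"
    and "(1 - real n * loss) * real (card T) \<le> real (card M)"
  obtains r p b G where "r < n" "\<sigma> r = None" "G \<subseteq> M" "\<alpha> * real (card T) \<le> real (card G)"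
    "\<forall>h\<in>G. \<forall>x\<in>subcube n (\<sigma>(r := Some p)). h x = b"
proof -
  have "finite M" "M \<subseteq> H_DL n"
    using assms(2) finite_T T_sub_H_DL finite_subset by auto
  then obtain l b G where "G \<subseteq> M" and M_le: "card M \<le> (4 * n + 4) * card G"
    and pinned: "\<forall>h\<in>G. pins n \<sigma> h (l, b)"
    by (rule H_DL_pinned_subfamily)
  have "real (card M) \<le> (4 * real n + 4) * real (card G)"
    using of_nat_mono[OF M_le] by simp
  moreover have "(4 * real n + 4) * \<alpha> * real (card T) \<le> (1 - real n * loss) * real (card T)"
    using branching_alpha_le n_loss_le card_T_pos by (intro mult_right_mono) auto
  ultimately have "(4 * real n + 4) * (\<alpha> * real (card T)) \<le> (4 * real n + 4) * real (card G)"
    using assms(3) by (simp only: mult.assoc)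
  then have G_large: "\<alpha> * real (card T) \<le> real (card G)"
    by (simp add: mult_le_cancel_left_pos add_pos_nonneg)
  moreover have "0 < \<alpha> * real (card T)"
    using alpha_pos card_T_pos by simp
  ultimately have "G \<noteq> {}"
    by auto
  obtain r p where "r < n" "\<sigma> r = None" "\<forall>h\<in>G. \<forall>x\<in>subcube n (\<sigma>(r := Some p)). h x = b"
  proof (cases l)
    case None
    obtain r where "r < n" "\<sigma> r = None"
      using assms(1) by (auto simp: free_vars_def)
    then show thesis
      using that[of r True] pinned None by (simp add: pins_def subcube_fix)
  next
    case (Some rp)
    then obtain r p where "l = Some (r, p)"
      by (cases rp) simp
    with pinned \<open>G \<noteq> {}\<close> have "r < n" "\<sigma> r = None"
      by (auto simp: pins_def)
    then show thesis
      using that[of r p] pinned \<open>l = Some (r, p)\<close> by (simp add: pins_def subcube_fix)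
  qed
  then show thesis
    using that \<open>G \<subseteq> M\<close> G_large by blast
qed

lemma card_beyond_threshold_lt:
  assumes G: "G \<subseteq> T" "\<alpha> * real (card T) \<le> real (card G)" "\<forall>h\<in>G. \<forall>x\<in>subcube n \<tau>. h x = b"
    and P_large: "\<alpha> * N \<le> real (card (subcube n \<tau>))" and "M \<subseteq> T"
  shows "real (card {h\<in>M. threshold (real (card (subcube n \<tau>))) \<le> real (card {x\<in>subcube n \<tau>. h x \<noteq> b})})
    < loss * real (card T)"
proof (cases "4 * \<alpha> * N \<le> real (card (subcube n \<tau>))")
  case True
  have "real (card {h\<in>M. threshold (real (card (subcube n \<tau>))) \<le> real (card {x\<in>subcube n \<tau>. h x \<noteq> b})})
      < (\<Sum>i\<le>2. (2 * real n) ^ i) * \<alpha> * real (card T)"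
    using True \<open>M \<subseteq> T\<close> by (intro card_far_family_lt[OF G]) (auto simp: threshold_def)
  then show ?thesis
    by (simp add: loss_def)
next
  case False
  have "real (card {h\<in>M. threshold (real (card (subcube n \<tau>))) \<le> real (card {x\<in>subcube n \<tau>. h x \<noteq> b})})
      < (\<Sum>i\<le>0. (2 * real n) ^ i) * \<alpha> * real (card T)"
    using False P_large \<open>M \<subseteq> T\<close> by (intro card_far_family_lt[OF G]) (auto simp: threshold_def)
  also have "\<dots> \<le> (\<Sum>i\<le>2. (2 * real n) ^ i) * \<alpha> * real (card T)"
    using alpha_pos card_T_pos by (intro mult_right_mono) (simp_all add: numeral_2_eq_2)
  also have "\<dots> = loss * real (card T)"
    by (simp add: loss_def)
  finally show ?thesis .
qed

lemma approximable_cons: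
  assumes "r < n" "\<sigma> r = None" and "M1 \<subseteq> M"
    and P_large: "\<alpha> * N \<le> real (card (subcube n (\<sigma>(r := Some p))))"
    and P_close: "\<forall>h\<in>M1. real (card {x\<in>subcube n (\<sigma>(r := Some p)). h x \<noteq> b})
      < threshold (real (card (subcube n (\<sigma>(r := Some p)))))"
    and "approximable (\<sigma>(r := Some (\<not> p))) M1"
  shows "approximable \<sigma> M"
proof -
  let ?C = "subcube n \<sigma>" and ?P = "subcube n (\<sigma>(r := Some p))" and ?R = "subcube n (\<sigma>(r := Some (\<not> p)))"
  let ?q = "real (card ?P)"
  obtain L d M' where "dl_wf n L" "M' \<subseteq> M1"
    and M'_large: "(1 - real n * loss) * real (card T) \<le> real (card M') * (4 * real n + 4) ^ 2"
    and M'_close: "\<forall>h\<in>M'. real (card {x\<in>?R. h x \<noteq> dl_eval L d x}) \<le> error_budget (real (card ?R))"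
    using assms(6) unfolding approximable_def by blast
  have "card ?C = 2 * card ?P" "card ?C = 2 * card ?R"
    using card_subcube_halves[of r n \<sigma>] assms(1,2) by auto
  then have R_eq: "real (card ?R) = ?q" and C_eq: "real (card ?C) = 2 * ?q"
    by simp_all
  have "real (card {x\<in>?C. h x \<noteq> dl_eval (((r, p), b) # L) d x}) \<le> error_budget (real (card ?C))"
    if "h \<in> M'" for h
  proof -
    have "card {x\<in>?C. h x \<noteq> dl_eval (((r, p), b) # L) d x}
        \<le> card ({x\<in>?P. h x \<noteq> b} \<union> {x\<in>?R. h x \<noteq> dl_eval L d x})"
      using disagreements_dl_cons_subset[of r n \<sigma> h p b L d] assms(1,2)
      by (intro card_mono) (simp_all add: finite_subcube)
    also have "\<dots> \<le> card {x\<in>?P. h x \<noteq> b} + card {x\<in>?R. h x \<noteq> dl_eval L d x}"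
      by (rule card_Un_le)
    finally have "real (card {x\<in>?C. h x \<noteq> dl_eval (((r, p), b) # L) d x})
        \<le> real (card {x\<in>?P. h x \<noteq> b}) + real (card {x\<in>?R. h x \<noteq> dl_eval L d x})"
      by linarith
    also have "\<dots> \<le> threshold ?q + error_budget ?q"
      using P_close M'_close R_eq \<open>M' \<subseteq> M1\<close> that by fastforce
    also have "\<dots> \<le> error_budget (real (card ?C))"
      using error_budget_step[OF P_large] C_eq by simp
    finally show ?thesis .
  qed
  then show ?thesis
    unfolding approximable_def using \<open>dl_wf n L\<close> assms(1,3) \<open>M' \<subseteq> M1\<close> M'_large
    by (intro exI[of _ "((r, p), b) # L"] exI[of _ d] exI[of _ M']) auto
qed

lemma prune_far_from_popular_literal:
  assumes "free_vars n \<sigma> \<noteq> {}" "M \<subseteq> T"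
    and "(1 - real n * loss) * real (card T) \<le> real (card M)"
    and "2 * \<alpha> * N \<le> real (card (subcube n \<sigma>))"
  obtains r p b M1 where "r < n" "\<sigma> r = None" "M1 \<subseteq> M"
    "real (card M) < real (card M1) + loss * real (card T)"
    "\<alpha> * N \<le> real (card (subcube n (\<sigma>(r := Some p))))"
    "\<forall>h\<in>M1. real (card {x\<in>subcube n (\<sigma>(r := Some p)). h x \<noteq> b})
      < threshold (real (card (subcube n (\<sigma>(r := Some p)))))"
proof -
  obtain r p b G where r: "r < n" "\<sigma> r = None" and G: "G \<subseteq> M" "\<alpha> * real (card T) \<le> real (card G)"
    and G_const: "\<forall>h\<in>G. \<forall>x\<in>subcube n (\<sigma>(r := Some p)). h x = b"
    by (rule popular_literal[OF assms(1-3)])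
  let ?P = "subcube n (\<sigma>(r := Some p))"
  define F where "F = {h\<in>M. threshold (real (card ?P)) \<le> real (card {x\<in>?P. h x \<noteq> b})}"
  have "card (subcube n \<sigma>) = 2 * card ?P"
    using card_subcube_halves[of r n \<sigma> p] r by simp
  with assms(4) have P_large: "\<alpha> * N \<le> real (card ?P)"
    by simp
  have "G \<subseteq> T"
    using G(1) assms(2) by blast
  have "real (card F) < loss * real (card T)"
    unfolding F_def using card_beyond_threshold_lt[OF \<open>G \<subseteq> T\<close> G(2) G_const P_large assms(2)] .
  moreover have "finite M"
    using assms(2) finite_T finite_subset by auto
  then have "real (card (M - F)) = real (card M) - real (card F)"
    by (simp add: F_def card_Diff_subset card_mono of_nat_diff)
  moreover have "\<forall>h\<in>M - F. real (card {x\<in>?P. h x \<noteq> b}) < threshold (real (card ?P))"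
    by (auto simp: F_def)
  ultimately show thesis
    using that[of r "M - F" p b] r P_large by auto
qed

lemma approximable_if_large:
  assumes "M \<subseteq> T"
    and "(1 - real (n - card (free_vars n \<sigma>)) * loss) * real (card T) \<le> real (card M)"
  shows "approximable \<sigma> M"
  using assms
proof (induction "card (free_vars n \<sigma>)" arbitrary: \<sigma> M)
  case 0
  then have "free_vars n \<sigma> = {}"
    using finite_free_vars by simp
  with 0 show ?case
    by (intro approximable_if_degenerate) simp_all
next
  case (Suc k)
  have "(1 - real n * loss) * real (card T) \<le> (1 - real (n - card (free_vars n \<sigma>)) * loss) * real (card T)"
    using loss_nonneg card_T_pos by (intro mult_right_mono) (auto intro: mult_right_mono)
  with Suc.prems(2) have M_large: "(1 - real n * loss) * real (card T) \<le> real (card M)"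
    by linarith
  show ?case
  proof (cases "real (card (subcube n \<sigma>)) < 2 * \<alpha> * N")
    case True
    then show ?thesis
      using Suc.prems(1) M_large by (intro approximable_if_degenerate) simp_all
  next
    case False
    have free: "free_vars n \<sigma> \<noteq> {}"
      using Suc.hyps(2) by auto
    have C_large: "2 * \<alpha> * N \<le> real (card (subcube n \<sigma>))"
      using False by simp
    obtain r p b M1 where r: "r < n" "\<sigma> r = None" and "M1 \<subseteq> M"
      and M1_large: "real (card M) < real (card M1) + loss * real (card T)"
      and P_large: "\<alpha> * N \<le> real (card (subcube n (\<sigma>(r := Some p))))"
      and P_close: "\<forall>h\<in>M1. real (card {x\<in>subcube n (\<sigma>(r := Some p)). h x \<noteq> b})
        < threshold (real (card (subcube n (\<sigma>(r := Some p)))))"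
      by (rule prune_far_from_popular_literal[OF free Suc.prems(1) M_large C_large])
    have "real (n - k) = real (n - card (free_vars n \<sigma>)) + 1"
      using Suc.hyps(2) card_free_vars_le[of n \<sigma>] by simp
    then have "(1 - real (n - k) * loss) * real (card T) \<le> real (card M1)"
      using Suc.prems(2) M1_large by (simp add: algebra_simps)
    moreover have "k = card (free_vars n (\<sigma>(r := Some (\<not> p))))"
      using card_free_vars_fix[of r n \<sigma> "\<not> p"] r Suc.hyps(2) by simp
    ultimately have "approximable (\<sigma>(r := Some (\<not> p))) M1"
      using Suc.hyps(1)[of "\<sigma>(r := Some (\<not> p))" M1] \<open>M1 \<subseteq> M\<close> Suc.prems(1) by auto
    then show ?thesis
      using approximable_cons[OF r \<open>M1 \<subseteq> M\<close> P_large P_close] by blast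
  qed
qed

lemma T_tight:
  assumes "\<alpha> \<le> \<epsilon>"
  shows "tight (cube n) (H_DL n) \<alpha> \<epsilon> T"
proof -
  have "approximable (\<lambda>_. None) T"
    by (rule approximable_if_large) (simp_all add: free_vars_def)
  then obtain L d M' where "dl_wf n L" "M' \<subseteq> T"
    and M'_large: "(1 - real n * loss) * real (card T) \<le> real (card M') * (4 * real n + 4) ^ 2"
    and M'_close: "\<forall>h\<in>M'. real (card {x\<in>cube n. h x \<noteq> dl_eval L d x}) \<le> error_budget N"
    unfolding approximable_def subcube_unrestricted by blast
  let ?g = "dl_fun n L d"
  have "M' \<subseteq> T \<inter> ball_H (cube n) (H_DL n) \<epsilon> ?g"
  proof
    fix h assume "h \<in> M'"
    have "{x\<in>cube n. ?g x \<noteq> h x} = {x\<in>cube n. h x \<noteq> dl_eval L d x}"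
      by (auto simp: dl_fun_def)
    then have "real (card {x\<in>cube n. ?g x \<noteq> h x}) \<le> \<alpha> * N"
      using M'_close \<open>h \<in> M'\<close> error_budget_cube by fastforce
    also have "\<dots> \<le> \<epsilon> * N"
      using assms N_pos by simp
    finally show "h \<in> T \<inter> ball_H (cube n) (H_DL n) \<epsilon> ?g"
      using \<open>h \<in> M'\<close> \<open>M' \<subseteq> T\<close> T_sub_H_DL by (auto simp: ball_H_def eps_close_def)
  qed
  then have "real (card M') \<le> real (card (T \<inter> ball_H (cube n) (H_DL n) \<epsilon> ?g))"
    using finite_T by (simp add: card_mono)
  moreover have "\<alpha> * real (card T) \<le> real (card M')"
  proof -
    have "(4 * real n + 4) ^ 2 * (\<alpha> * real (card T)) \<le> 64 / 200 * real (card T)"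
      using branching_sq_alpha_le card_T_pos by (simp add: mult.assoc[symmetric] mult_right_mono)
    also have "\<dots> \<le> (1 - real n * loss) * real (card T)"
      using n_loss_le card_T_pos by (intro mult_right_mono) auto
    also have "\<dots> \<le> (4 * real n + 4) ^ 2 * real (card M')"
      using M'_large by (simp add: mult.commute)
    finally show ?thesis
      by (simp add: mult_le_cancel_left)
  qed
  ultimately have "\<alpha> * real (card T) \<le> real (card (T \<inter> ball_H (cube n) (H_DL n) \<epsilon> ?g))"
    by linarith
  then show ?thesis
    unfolding tight_def using dl_fun_in_H_DL[OF \<open>dl_wf n L\<close>, of d] by blast
qed

end

theorem theorem8:
  fixes n :: nat and \<epsilon> :: real
  assumes "n \<ge> 1"
    and "1 / 2 ^ n < \<epsilon>" and "\<epsilon> < 1"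
  shows "separable (cube n) (H_DL n) (min (1 / (200 * real n ^ 4)) \<epsilon>) \<epsilon>"
proof -
  define \<alpha> where "\<alpha> = min (1 / (200 * real n ^ 4)) \<epsilon>"
  have "0 < 1 / (2 :: real) ^ n"
    by simp
  then have "0 < \<epsilon>"
    using assms(2) by linarith
  with assms(1) have "0 < \<alpha>" "\<alpha> \<le> 1 / (200 * real n ^ 4)" "\<alpha> \<le> \<epsilon>"
    by (simp_all add: \<alpha>_def)
  show ?thesis
    unfolding \<alpha>_def[symmetric]
  proof (rule separable_if_unseparated_tight)
    show "finite (cube n)" "cube n \<noteq> {}" "H_DL n \<noteq> {}"
      using finite_cube card_cube_pos[of n] dl_fun_in_H_DL[of "[]" n False] by auto
    fix T assume "T \<subseteq> H_DL n" "unseparated (cube n) T \<alpha>"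
    then interpret dl_unseparated n T \<alpha>
      using assms(1) \<open>\<alpha> \<le> 1 / (200 * real n ^ 4)\<close> by (simp add: dl_unseparated_def dl_unseparated_axioms_def)
    show "tight (cube n) (H_DL n) \<alpha> \<epsilon> T"
      using \<open>\<alpha> \<le> \<epsilon>\<close> by (rule T_tight)
  qed (rule \<open>0 < \<alpha>\<close>)
qed

end
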